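(* Let $p$ be a prime, $k>0$ an integer and $q=p^k$. Let $B(X),C(X)\in\mathbb{F}_{q^3}[X]$ and $L(X)=\sum_{i=0}^r a_iX^{p^i}\in\mathbb{F}_q[X]$. Put \[ f(X)=L(X)+B(X)\circ(X^q-X)+(X^{q^2}+X^q+X)\circ C(X). \] Then $f(X)$ permutes $\mathbb{F}_{q^3}$ if and only if both of the following hold: (a) $L(X)+(X^q-X)\circ B(X)$ permutes the set $\Gamma$ of roots in $\mathbb{F}_{q^3}$ of $X^{q^2}+X^q+X$ (i.e. maps $\Gamma$ bijectively onto $\Gamma$); (b) $L(X)+(X^{q^2}+X^q+X)\circ C(X)$ is injective on $u+\mathbb{F}_q$ for every $u\in\mathbb{F}_{q^3}$.
   Context: $\circ$ denotes composition of polynomials. A polynomial permutes $\mathbb{F}_{q^3}$ if the induced map $\mathbb{F}_{q^3}\to\mathbb{F}_{q^3}$ is a bijection. *)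

theory Defs
  imports "HOL-Computational_Algebra.Polynomial"
begin

definition subfield_Fq :: "nat \<Rightarrow> 'a::field set" where
  "subfield_Fq q = {x. x ^ q = x}"

definition Xq_minus_X :: "nat \<Rightarrow> 'a::field poly" where
  "Xq_minus_X q = monom 1 q - monom 1 1"

definition trace_poly :: "nat \<Rightarrow> 'a::field poly" where
  "trace_poly q = monom 1 (q^2) + monom 1 q + monom 1 1"

definition Gamma_set :: "nat \<Rightarrow> 'a::field set" where
  "Gamma_set q = {x. poly (trace_poly q) x = 0}"

end

theory Submission
  imports Defs
begin

text \<open>
  Put \<open>\<psi> x = x^q - x\<close> and \<open>T x = x^(q^2) + x^q + x\<close>. As \<open>q\<close> is a power of the
  characteristic and \<open>x^(q^3) = x\<close>, both maps are additive, \<open>\<psi> \<circ> T = 0 = T \<circ> \<psi>\<close>, and \<open>\<psi>\<close>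
  commutes with \<open>L\<close> because the coefficients of \<open>L\<close> lie in \<open>F_q\<close>. Hence \<open>\<psi> \<circ> f = g \<circ> \<psi>\<close>
  with \<open>g = L + \<psi> \<circ> B\<close>, and the Akbary--Ghioca--Wang criterion says that \<open>f\<close> is a bijection
  iff \<open>g\<close> permutes the image of \<open>\<psi>\<close> and \<open>f\<close> is injective on every fiber of \<open>\<psi>\<close>. The image
  of \<open>\<psi>\<close> lies in \<open>\<Gamma>\<close>, and counting (\<open>|ker \<psi>| \<le> q\<close>, \<open>|\<Gamma>| \<le> q^2\<close>) shows it is all of
  \<open>\<Gamma>\<close>. The fibers are the cosets \<open>u + F_q\<close>, on which \<open>f\<close> differs from \<open>L + T \<circ> C\<close> by the
  constant \<open>B (\<psi> u)\<close>.
\<close>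

lemma AGW_criterion:
  fixes f :: "'a \<Rightarrow> 'a" and \<psi> :: "'a \<Rightarrow> 'b" and g :: "'b \<Rightarrow> 'b"
  assumes fin: "finite (UNIV :: 'a set)" and comm: "\<And>x. \<psi> (f x) = g (\<psi> x)"
  shows "bij f \<longleftrightarrow> bij_betw g (range \<psi>) (range \<psi>) \<and> (\<forall>s. inj_on f {x. \<psi> x = s})"
proof
  assume "bij f"
  have "g ` range \<psi> = \<psi> ` range f"
    by (simp add: image_image comm)
  also have "\<dots> = range \<psi>"
    using \<open>bij f\<close> by (simp add: bij_is_surj)
  finally have "bij_betw g (range \<psi>) (range \<psi>)"
    using fin by (simp add: bij_betw_def inj_on_iff_eq_card)
  moreover have "inj_on f A" for A
    using \<open>bij f\<close> bij_is_inj inj_on_subset by blast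
  ultimately show "bij_betw g (range \<psi>) (range \<psi>) \<and> (\<forall>s. inj_on f {x. \<psi> x = s})"
    by blast
next
  assume g: "bij_betw g (range \<psi>) (range \<psi>) \<and> (\<forall>s. inj_on f {x. \<psi> x = s})"
  have "inj f"
  proof (rule injI)
    fix x y assume "f x = f y"
    then have "g (\<psi> x) = g (\<psi> y)"
      by (simp flip: comm)
    then have "\<psi> y = \<psi> x"
      using g by (auto simp: bij_betw_def dest: inj_onD)
    with \<open>f x = f y\<close> g show "x = y"
      by (auto dest: inj_onD[of f "{z. \<psi> z = \<psi> x}"])
  qed
  then show "bij f"
    using fin by (simp add: bij_def finite_UNIV_inj_surj)
qed

lemma (in additive) fiber_eq_coset_kernel:
  "{y. f y = f x} = (\<lambda>z. x + z) ` {z. f z = 0}"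
proof
  show "{y. f y = f x} \<subseteq> (\<lambda>z. x + z) ` {z. f z = 0}"
  proof
    fix y assume "y \<in> {y. f y = f x}"
    then have "y = x + (y - x)" "f (y - x) = 0"
      by (simp_all add: diff)
    then show "y \<in> (\<lambda>z. x + z) ` {z. f z = 0}"
      by blast
  qed
qed (auto simp: add)

lemma (in additive) card_UNIV_eq_card_range_mult_card_kernel:
  assumes "finite (UNIV :: 'a set)"
  shows "card (UNIV :: 'a set) = card (range f) * card {x. f x = 0}"
proof -
  have fiber_card: "card {x. f x = s} = card {x. f x = 0}" if "s \<in> range f" for s
  proof -
    from that obtain u where "s = f u" by blast
    then show ?thesis
      by (simp add: fiber_eq_coset_kernel card_image)
  qed
  have "card (UNIV :: 'a set) = card (\<Union>s\<in>range f. {x. f x = s})"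
    by (rule arg_cong[where f = card]) blast
  also have "\<dots> = (\<Sum>s\<in>range f. card {x. f x = s})"
    by (rule card_UN_disjoint) (auto intro: rev_finite_subset[OF assms])
  also have "\<dots> = card (range f) * card {x. f x = 0}"
    by (simp add: fiber_card)
  finally show ?thesis .
qed

lemma AGW_criterion_additive:
  fixes \<psi> L T B C :: "'a::ab_group_add \<Rightarrow> 'a"
  assumes fin: "finite (UNIV :: 'a set)" and "additive \<psi>"
    and \<psi>_L: "\<And>x. \<psi> (L x) = L (\<psi> x)" and \<psi>_T: "\<And>z. \<psi> (T z) = 0"
  shows "bij (\<lambda>x. L x + B (\<psi> x) + T (C x)) \<longleftrightarrow>
     bij_betw (\<lambda>y. L y + \<psi> (B y)) (range \<psi>) (range \<psi>)
     \<and> (\<forall>u. inj_on (\<lambda>x. L x + T (C x)) ((\<lambda>z. u + z) ` {z. \<psi> z = 0}))"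
proof -
  interpret additive \<psi> by fact
  let ?f = "\<lambda>x. L x + B (\<psi> x) + T (C x)" and ?h = "\<lambda>x. L x + T (C x)"
  have "\<psi> (?f x) = L (\<psi> x) + \<psi> (B (\<psi> x))" for x
    by (simp add: add \<psi>_L \<psi>_T)
  note criterion = AGW_criterion[where f = ?f and \<psi> = \<psi> and g = "\<lambda>y. L y + \<psi> (B y)", OF fin this]
  have on_fiber: "inj_on ?f {x. \<psi> x = s} \<longleftrightarrow> inj_on ?h {x. \<psi> x = s}" for s
  proof -
    have "inj_on ?f {x. \<psi> x = s} \<longleftrightarrow> inj_on (\<lambda>x. ?h x + B s) {x. \<psi> x = s}"
      by (rule inj_on_cong) (simp add: algebra_simps)
    also have "\<dots> \<longleftrightarrow> inj_on ?h {x. \<psi> x = s}"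
      unfolding inj_on_def by simp
    finally show ?thesis .
  qed
  have on_cosets: "(\<forall>s. inj_on ?h {x. \<psi> x = s})
      \<longleftrightarrow> (\<forall>u. inj_on ?h ((\<lambda>z. u + z) ` {z. \<psi> z = 0}))"
  proof (intro iffI allI)
    fix s assume "\<forall>u. inj_on ?h ((\<lambda>z. u + z) ` {z. \<psi> z = 0})"
    then have "inj_on ?h {x. \<psi> x = \<psi> u}" for u
      by (simp add: fiber_eq_coset_kernel)
    moreover have "{x. \<psi> x = s} = {}" if "s \<notin> range \<psi>"
      using that by auto
    ultimately show "inj_on ?h {x. \<psi> x = s}"
      by (cases "s \<in> range \<psi>") auto
  qed (simp add: fiber_eq_coset_kernel[symmetric])
  show ?thesis
    unfolding criterion on_fiber on_cosets ..
qed

lemma field_power_card_eq_self: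
  fixes x :: "'a::{field,finite}"
  shows "x ^ card (UNIV :: 'a set) = x"
proof (cases "x = 0")
  case False
  \<comment> \<open>\<open>U\<close> is kept opaque: simp loops between \<open>card UNIV\<close> and \<open>card (UNIV - {0})\<close>.\<close>
  define U where "U = UNIV - {0 :: 'a}"
  have "x ^ card U * \<Prod>U = (\<Prod>y\<in>U. x * y)"
    by (simp add: prod.distrib)
  also have "\<dots> = \<Prod>U"
    by (rule prod.reindex_bij_witness[where i = "\<lambda>y. y / x" and j = "\<lambda>y. x * y"])
      (use False in \<open>auto simp: U_def\<close>)
  finally have "x ^ card U = 1"
    by (simp add: U_def prod_zero_iff)
  moreover have "card (UNIV :: 'a set) = Suc (card U)"
    by (simp add: U_def card_Diff_singleton finite_UNIV_card_ge_0)
  ultimately show ?thesis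
    by simp
qed (simp add: finite_UNIV_card_ge_0)

lemma of_nat_card_UNIV_eq_0:
  "of_nat (card (UNIV :: 'a::{ring_1,finite} set)) = (0 :: 'a)"
proof -
  have "(\<Sum>y\<in>UNIV. 1 + y) = (\<Sum>y\<in>UNIV. y :: 'a)"
    by (rule sum.reindex_bij_witness[where i = "\<lambda>y. y - 1" and j = "\<lambda>y. 1 + y"]) auto
  then show ?thesis
    by (simp add: sum.distrib)
qed

lemma CHAR_eq_of_card_eq_prime_power:
  assumes "prime p" and "n > 0" and "card (UNIV :: 'a::{field,finite} set) = p ^ n"
  shows "CHAR('a) = p"
proof -
  have "prime CHAR('a)"
    by (simp add: prime_CHAR_semidom finite_imp_CHAR_pos)
  moreover have "CHAR('a) dvd p ^ n"
    using of_nat_card_UNIV_eq_0[where 'a = 'a] unfolding assms(3) of_nat_eq_0_iff_char_dvd .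
  ultimately show ?thesis
    using assms(1,2) by (simp add: prime_dvd_power_iff primes_dvd_imp_eq)
qed

lemma poly_Xq_minus_X [simp]: "poly (Xq_minus_X q) x = x ^ q - x"
  by (simp add: Xq_minus_X_def poly_monom)

lemma poly_trace_poly [simp]: "poly (trace_poly q) x = x ^ q\<^sup>2 + x ^ q + x"
  by (simp add: trace_poly_def poly_monom)

lemma additive_power_CHAR:
  assumes "prime CHAR('a::comm_ring_1)"
  shows "additive (\<lambda>x::'a. x ^ CHAR('a) ^ n)"
  by standard (rule freshmans_dream'[OF assms refl])

lemma additive_linearized_poly:
  fixes a :: "nat \<Rightarrow> 'a::comm_ring_1"
  assumes "prime CHAR('a)"
  shows "additive (poly (\<Sum>i\<le>r. monom (a i) (CHAR('a) ^ i)))"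
proof
  fix x y :: 'a
  note frobenius_add = additive.add[OF additive_power_CHAR[OF assms]]
  show "poly (\<Sum>i\<le>r. monom (a i) (CHAR('a) ^ i)) (x + y)
      = poly (\<Sum>i\<le>r. monom (a i) (CHAR('a) ^ i)) x + poly (\<Sum>i\<le>r. monom (a i) (CHAR('a) ^ i)) y"
    by (simp add: poly_sum poly_monom frobenius_add distrib_left sum.distrib)
qed

lemma linearized_poly_power_commute:
  fixes a :: "nat \<Rightarrow> 'a::comm_ring_1"
  assumes "prime CHAR('a)" and "\<forall>i\<le>r. a i ^ CHAR('a) ^ k = a i"
  shows "poly (\<Sum>i\<le>r. monom (a i) (CHAR('a) ^ i)) x ^ CHAR('a) ^ k
       = poly (\<Sum>i\<le>r. monom (a i) (CHAR('a) ^ i)) (x ^ CHAR('a) ^ k)"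
proof -
  have "poly (\<Sum>i\<le>r. monom (a i) (CHAR('a) ^ i)) x ^ CHAR('a) ^ k
      = (\<Sum>i\<le>r. (a i * x ^ CHAR('a) ^ i) ^ CHAR('a) ^ k)"
    by (simp add: poly_sum poly_monom freshmans_dream_sum'[OF assms(1) refl])
  also have "\<dots> = (\<Sum>i\<le>r. a i * (x ^ CHAR('a) ^ k) ^ CHAR('a) ^ i)"
    using assms(2) by (intro sum.cong) (simp_all add: power_mult_distrib flip: power_mult add: mult.commute)
  finally show ?thesis
    by (simp add: poly_sum poly_monom)
qed

lemma Xq_minus_X_linearized_poly_commute:
  fixes a :: "nat \<Rightarrow> 'a::field"
  assumes "CHAR('a) = p" and "prime p" and "\<forall>i\<le>r. a i \<in> subfield_Fq (p ^ k)"
  shows "poly (Xq_minus_X (p ^ k)) (poly (\<Sum>i\<le>r. monom (a i) (p ^ i)) x)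
       = poly (\<Sum>i\<le>r. monom (a i) (p ^ i)) (poly (Xq_minus_X (p ^ k)) x)"
proof -
  have "additive (poly (\<Sum>i\<le>r. monom (a i) (p ^ i)))"
    using additive_linearized_poly[of a r] assms(1,2) by simp
  moreover have "poly (\<Sum>i\<le>r. monom (a i) (p ^ i)) x ^ p ^ k
      = poly (\<Sum>i\<le>r. monom (a i) (p ^ i)) (x ^ p ^ k)"
    using linearized_poly_power_commute[of r a k] assms by (simp add: subfield_Fq_def)
  ultimately show ?thesis
    by (simp add: additive.diff)
qed

lemma additive_poly_Xq_minus_X:
  assumes "additive (\<lambda>x::'a::field. x ^ q)"
  shows "additive (poly (Xq_minus_X q) :: 'a \<Rightarrow> 'a)"
  by standard (simp add: additive.add[OF assms])

lemma card_roots_Xq_minus_X_le: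
  assumes "q \<ge> 2"
  shows "card {x::'a::field. poly (Xq_minus_X q) x = 0} \<le> q"
proof -
  have "coeff (Xq_minus_X q) q = (1 :: 'a)"
    using assms by (simp add: Xq_minus_X_def coeff_monom)
  then have "Xq_minus_X q \<noteq> (0 :: 'a poly)"
    by auto
  moreover have "degree (Xq_minus_X q :: 'a poly) \<le> q"
    unfolding Xq_minus_X_def using assms
    by (intro degree_diff_le) (auto intro: order.trans[OF degree_monom_le])
  ultimately show ?thesis
    using card_poly_roots_bound le_trans by blast
qed

lemma card_Gamma_set_le:
  assumes "q \<ge> 2"
  shows "card (Gamma_set q :: 'a::field set) \<le> q\<^sup>2"
proof -
  have "q < q\<^sup>2"
    using assms by (simp add: power2_eq_square)
  then have "coeff (trace_poly q) (q\<^sup>2) = (1 :: 'a)"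
    using assms by (simp add: trace_poly_def coeff_monom)
  then have "trace_poly q \<noteq> (0 :: 'a poly)"
    by auto
  moreover have "degree (trace_poly q :: 'a poly) \<le> q\<^sup>2"
    unfolding trace_poly_def using assms
    by (intro degree_add_le) (auto intro: order.trans[OF degree_monom_le] simp: power2_eq_square)
  ultimately show ?thesis
    unfolding Gamma_set_def using card_poly_roots_bound le_trans by blast
qed

lemma
  fixes x :: "'a::field"
  assumes "additive (\<lambda>x::'a. x ^ q)" and "\<And>x::'a. x ^ q ^ 3 = x"
  shows trace_poly_Xq_minus_X: "poly (trace_poly q) (poly (Xq_minus_X q) x) = 0"
    and Xq_minus_X_trace_poly: "poly (Xq_minus_X q) (poly (trace_poly q) x) = 0"
proof -
  interpret additive "\<lambda>x::'a. x ^ q" by fact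
  have frobenius_square: "y ^ q\<^sup>2 = (y ^ q) ^ q" and frobenius_cube: "((y ^ q) ^ q) ^ q = y" for y :: 'a
    using assms(2)[of y] by (simp_all add: power2_eq_square power3_eq_cube flip: power_mult)
  show "poly (trace_poly q) (poly (Xq_minus_X q) x) = 0"
    by (simp add: diff frobenius_square frobenius_cube)
  show "poly (Xq_minus_X q) (poly (trace_poly q) x) = 0"
    by (simp add: add frobenius_square frobenius_cube)
qed

lemma Gamma_set_eq_range_Xq_minus_X:
  assumes frobenius: "additive (\<lambda>x::'a::{field,finite}. x ^ q)"
    and card: "card (UNIV :: 'a set) = q ^ 3"
  shows "Gamma_set q = range (poly (Xq_minus_X q) :: 'a \<Rightarrow> 'a)"
proof -
  have "card {0, 1 :: 'a} \<le> card (UNIV :: 'a set)"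
    by (rule card_mono) simp_all
  then have "2 \<le> q ^ 3"
    using card by simp
  have "q \<ge> 2"
  proof (rule ccontr)
    assume "\<not> q \<ge> 2"
    then have "q ^ 3 \<le> 1"
      by (intro power_le_one) auto
    with \<open>2 \<le> q ^ 3\<close> show False
      by simp
  qed
  let ?\<psi> = "poly (Xq_minus_X q) :: 'a \<Rightarrow> 'a"
  have "x ^ q ^ 3 = x" for x :: 'a
    using field_power_card_eq_self[of x] card by simp
  then have range_sub: "range ?\<psi> \<subseteq> Gamma_set q"
    using trace_poly_Xq_minus_X[OF frobenius] by (auto simp: Gamma_set_def)
  interpret additive ?\<psi>
    by (rule additive_poly_Xq_minus_X[OF frobenius])
  have "q\<^sup>2 * q = card (range ?\<psi>) * card {x. ?\<psi> x = 0}"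
    using card_UNIV_eq_card_range_mult_card_kernel card by (simp add: power3_eq_cube power2_eq_square)
  also have "\<dots> \<le> card (range ?\<psi>) * q"
    by (rule mult_le_mono2[OF card_roots_Xq_minus_X_le[OF \<open>q \<ge> 2\<close>]])
  finally have "q\<^sup>2 \<le> card (range ?\<psi>)"
    using \<open>q \<ge> 2\<close> by simp
  then have "card (Gamma_set q :: 'a set) \<le> card (range ?\<psi>)"
    using card_Gamma_set_le[OF \<open>q \<ge> 2\<close>, where 'a = 'a] by linarith
  then have "range ?\<psi> = Gamma_set q"
    by (rule card_seteq[OF finite range_sub])
  then show ?thesis ..
qed

theorem lemma3p1:
  fixes p k r :: nat and a :: "nat \<Rightarrow> 'a::{field,finite}" and B C :: "'a poly"
  assumes "prime p" and "k > 0" and "card (UNIV :: 'a set) = (p ^ k) ^ 3"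
    and "\<forall>i\<le>r. a i \<in> subfield_Fq (p ^ k)"
  shows "bij (poly ((\<Sum>i\<le>r. monom (a i) (p ^ i))
                  + pcompose B (Xq_minus_X (p ^ k))
                  + pcompose (trace_poly (p ^ k)) C))
    \<longleftrightarrow>
      (bij_betw (poly ((\<Sum>i\<le>r. monom (a i) (p ^ i)) + pcompose (Xq_minus_X (p ^ k)) B))
                (Gamma_set (p ^ k)) (Gamma_set (p ^ k))
       \<and> (\<forall>u. inj_on (poly ((\<Sum>i\<le>r. monom (a i) (p ^ i)) + pcompose (trace_poly (p ^ k)) C))
                      ((\<lambda>x. u + x) ` subfield_Fq (p ^ k))))"
proof -
  define q where "q = p ^ k"
  define \<psi> where "\<psi> = (poly (Xq_minus_X q) :: 'a \<Rightarrow> 'a)"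
  define L where "L = poly (\<Sum>i\<le>r. monom (a i) (p ^ i))"
  have "CHAR('a) = p"
    using CHAR_eq_of_card_eq_prime_power[of p "k * 3"] assms(1-3) by (simp add: power_mult)
  then have frobenius: "additive (\<lambda>x::'a. x ^ q)"
    using additive_power_CHAR[where 'a = 'a, of k] assms(1) by (simp add: q_def)
  have "x ^ q ^ 3 = x" for x :: 'a
    using field_power_card_eq_self[of x] assms(3) by (simp add: q_def)
  then have \<psi>_T: "\<psi> (poly (trace_poly q) z) = 0" for z
    unfolding \<psi>_def by (rule Xq_minus_X_trace_poly[OF frobenius])
  have \<psi>_L: "\<psi> (L x) = L (\<psi> x)" for x
    unfolding \<psi>_def L_def q_def by (rule Xq_minus_X_linearized_poly_commute[OF \<open>CHAR('a) = p\<close> assms(1,4)])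
  have "additive \<psi>"
    unfolding \<psi>_def by (rule additive_poly_Xq_minus_X[OF frobenius])
  have Gamma: "Gamma_set q = range \<psi>"
    using Gamma_set_eq_range_Xq_minus_X[OF frobenius] assms(3) by (simp add: \<psi>_def q_def)
  have F_q: "subfield_Fq q = {z. \<psi> z = 0}"
    by (simp add: subfield_Fq_def \<psi>_def)
  have poly_eqs:
    "poly ((\<Sum>i\<le>r. monom (a i) (p ^ i)) + pcompose B (Xq_minus_X q) + pcompose (trace_poly q) C)
       = (\<lambda>x. L x + poly B (\<psi> x) + poly (trace_poly q) (poly C x))"
    "poly ((\<Sum>i\<le>r. monom (a i) (p ^ i)) + pcompose (Xq_minus_X q) B) = (\<lambda>y. L y + \<psi> (poly B y))"
    "poly ((\<Sum>i\<le>r. monom (a i) (p ^ i)) + pcompose (trace_poly q) C)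
       = (\<lambda>x. L x + poly (trace_poly q) (poly C x))"
    by (simp_all add: fun_eq_iff poly_pcompose L_def \<psi>_def)
  show ?thesis
    unfolding q_def[symmetric] poly_eqs Gamma F_q
    by (rule AGW_criterion_additive[where \<psi> = \<psi> and L = L and B = "poly B" and T = "poly (trace_poly q)" and C = "poly C",
          OF finite_UNIV \<open>additive \<psi>\<close> \<psi>_L \<psi>_T])
qed

end
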